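(* For every $n\ge 2$, if $\Delta,\Delta'\in\mathcal{P}_n$ form a special pair for rule $162$, then $lab_\Delta((i+1,i))=lab_{\Delta'}((i+1,i))$ for all $i\in\mathbb{Z}_n$.
   Context: Cells are indexed by $\mathbb{Z}_n=\{0,\dots,n-1\}$, indices modulo $n$. Rule $162$ has local rule $r_{162}(x_1,x_2,x_3)=(x_1\vee\neg x_2)\wedge x_3$ and global function $f_{162,n}(x)_i=r_{162}(x_{i-1},x_i,x_{i+1})$. An update schedule is an ordered partition $\Delta=(\Delta_1,\dots,\Delta_k)$ of $\mathbb{Z}_n$ into nonempty blocks; $\mathcal{P}_n$ is the set of them. For a block $B$ let $f^{(B)}(x)_i=f_{162,n}(x)_i$ if $i\in B$ and $x_i$ otherwise; $f^{(\Delta)}_{162,n}=f^{(\Delta_k)}\circ\cdots\circ f^{(\Delta_1)}$. For $u,v\in\mathbb{Z}_n$ with $u\in\Delta_a$, $v\in\Delta_b$, $lab_\Delta((u,v))=\oplus$ if $b\le a$ and $\ominus$ if $a<b$. $\Delta\equiv\Delta'$ iff $lab_\Delta$ and $lab_{\Delta'}$ agree on every arc $(i,i+1)$ and $(i+1,i)$. A pair $\Delta,\Delta'$ is special for rule $162$ if $\Delta\not\equiv\Delta'$ but $f^{(\Delta)}_{162,n}=f^{(\Delta')}_{162,n}$. *)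

theory Defs
  imports Main
begin

text \<open>Configurations are functions nat => bool; only indices 0..n-1 matter (cells of Z_n).\<close>

definition r162 :: "bool \<Rightarrow> bool \<Rightarrow> bool \<Rightarrow> bool" where
  "r162 x1 x2 x3 = ((x1 \<or> \<not> x2) \<and> x3)"

definition f162 :: "nat \<Rightarrow> (nat \<Rightarrow> bool) \<Rightarrow> (nat \<Rightarrow> bool)" where
  "f162 n x = (\<lambda>i. r162 (x ((i + n - 1) mod n)) (x i) (x ((i + 1) mod n)))"

definition block_update :: "nat \<Rightarrow> nat set \<Rightarrow> (nat \<Rightarrow> bool) \<Rightarrow> (nat \<Rightarrow> bool)" where
  "block_update n B x = (\<lambda>i. if i \<in> B then f162 n x i else x i)"

definition ordered_partition :: "nat \<Rightarrow> nat set list \<Rightarrow> bool" where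
  "ordered_partition n D \<longleftrightarrow>
     (\<forall>B\<in>set D. B \<noteq> {}) \<and>
     (\<forall>a<length D. \<forall>b<length D. a \<noteq> b \<longrightarrow> D ! a \<inter> D ! b = {}) \<and>
     \<Union>(set D) = {0..<n}"

text \<open>f^(Delta) = f^(Delta_k) o ... o f^(Delta_1): the first block is applied first.\<close>
definition sched_update :: "nat \<Rightarrow> nat set list \<Rightarrow> (nat \<Rightarrow> bool) \<Rightarrow> (nat \<Rightarrow> bool)" where
  "sched_update n D x = fold (block_update n) D x"

definition blk :: "nat set list \<Rightarrow> nat \<Rightarrow> nat" where
  "blk D u = (THE a. a < length D \<and> u \<in> D ! a)"

datatype label = LPlus | LMinus

definition lab :: "nat set list \<Rightarrow> nat \<Rightarrow> nat \<Rightarrow> label" where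
  "lab D u v = (if blk D v \<le> blk D u then LPlus else LMinus)"

definition sched_equiv :: "nat \<Rightarrow> nat set list \<Rightarrow> nat set list \<Rightarrow> bool" where
  "sched_equiv n D D' \<longleftrightarrow>
     (\<forall>i<n. lab D i ((i + 1) mod n) = lab D' i ((i + 1) mod n) \<and>
            lab D ((i + 1) mod n) i = lab D' ((i + 1) mod n) i)"

definition special_pair162 :: "nat \<Rightarrow> nat set list \<Rightarrow> nat set list \<Rightarrow> bool" where
  "special_pair162 n D D' \<longleftrightarrow>
     \<not> sched_equiv n D D' \<and> (\<forall>x. \<forall>i<n. sched_update n D x i = sched_update n D' x i)"

end

theory Submission
  imports Defs
begin

text \<open>
  Start from the configuration that is 1 everywhere except at cell i. Cell i is updated exactly
  once, to r162(x(i-1), 0, x(i+1)) = x(i+1), where x is the configuration current at that moment.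
  If cell i+1 is updated strictly before cell i, it has already become r162(0, 1, _) = 0; otherwise
  it is still 1. So the final value of cell i is the label of the arc (i+1, i), and two schedules
  with equal update functions agree on all these labels.
\<close>

lemma blk_eqI:
  assumes "ordered_partition n D" and "a < length D" and "j \<in> D ! a"
  shows "blk D j = a"
  unfolding blk_def
proof (rule the_equality)
  show "a < length D \<and> j \<in> D ! a" using assms(2,3) ..
next
  fix b assume "b < length D \<and> j \<in> D ! b"
  with assms show "b = a" unfolding ordered_partition_def by blast
qed

lemma blk_in_block:
  assumes "ordered_partition n D" and "j < n"
  shows "blk D j < length D" and "j \<in> D ! blk D j"
proof -
  from assms have "j \<in> \<Union>(set D)" unfolding ordered_partition_def by simp
  then obtain a where "a < length D" "j \<in> D ! a" by (metis UnionE in_set_conv_nth)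
  with blk_eqI[OF assms(1)] show "blk D j < length D" and "j \<in> D ! blk D j" by simp_all
qed

lemma fold_block_update_take:
  assumes "ordered_partition n D" and "j < n" and "k \<le> length D"
  shows "fold (block_update n) (take k D) x j =
    (if k \<le> blk D j then x j else f162 n (fold (block_update n) (take (blk D j) D) x) j)"
  using assms(3)
proof (induction k)
  case 0
  then show ?case by simp
next
  case (Suc k)
  then have "k < length D" by simp
  then have step: "fold (block_update n) (take (Suc k) D) x =
      block_update n (D ! k) (fold (block_update n) (take k D) x)"
    by (simp add: take_Suc_conv_app_nth)
  show ?case
  proof (cases "j \<in> D ! k")
    case True
    with \<open>k < length D\<close> have "blk D j = k" using blk_eqI[OF assms(1)] by blast
    with True show ?thesis unfolding step by (simp add: block_update_def)
  next
    case False
    then have "blk D j \<noteq> k" using blk_in_block[OF assms(1,2)] by auto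
    moreover have "block_update n (D ! k) y j = y j" for y
      using False by (simp add: block_update_def)
    ultimately show ?thesis unfolding step using Suc by auto
  qed
qed

lemma sched_update_eq_f162_before_block:
  assumes "ordered_partition n D" and "j < n"
  shows "sched_update n D x j = f162 n (fold (block_update n) (take (blk D j) D) x) j"
  using fold_block_update_take[OF assms, of "length D"] blk_in_block[OF assms]
  unfolding sched_update_def by simp

lemma fold_block_update_take_unchanged:
  assumes "ordered_partition n D" and "j < n" and "k \<le> blk D j"
  shows "fold (block_update n) (take k D) x j = x j"
  using fold_block_update_take[OF assms(1,2), of k] blk_in_block[OF assms(1,2)] assms(3) by simp

lemma pred_mod_Suc_mod:
  fixes i n :: nat
  assumes "i < n"
  shows "((i + 1) mod n + n - 1) mod n = i"
  using assms by (cases "Suc i = n") (auto simp: mod_Suc)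

lemma sched_update_single_zero:
  assumes D: "ordered_partition n D" and "n \<ge> 2" and i: "i < n"
  shows "sched_update n D (\<lambda>j. j \<noteq> i) i \<longleftrightarrow> lab D ((i + 1) mod n) i = LPlus"
proof -
  define x where "x = (\<lambda>j::nat. j \<noteq> i)"
  define i' where "i' = (i + 1) mod n"
  define s where "s k = fold (block_update n) (take k D) x" for k
  have i': "i' < n" "i' \<noteq> i"
    using assms(2) i unfolding i'_def by (auto simp: mod_Suc)
  have "s (blk D i) i = x i"
    unfolding s_def by (rule fold_block_update_take_unchanged[OF D i order_refl])
  then have final: "sched_update n D x i = s (blk D i) i'"
    using sched_update_eq_f162_before_block[OF D i, of x]
    unfolding s_def f162_def r162_def i'_def x_def by simp
  show ?thesis
  proof (cases "blk D i \<le> blk D i'")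
    case True
    have "s (blk D i) i' = x i'"
      unfolding s_def by (rule fold_block_update_take_unchanged[OF D i'(1) True])
    with True final i' show ?thesis by (simp add: x_def lab_def i'_def)
  next
    case False
    have "s (blk D i') i = x i" and "s (blk D i') i' = x i'"
      unfolding s_def using False
      by (simp_all add: fold_block_update_take_unchanged[OF D i] fold_block_update_take_unchanged[OF D i'(1)])
    then have "f162 n (s (blk D i')) i' = False"
      using pred_mod_Suc_mod[OF i] i'(2) unfolding f162_def r162_def x_def i'_def by simp
    moreover have "s (blk D i) i' = f162 n (s (blk D i')) i'"
      using fold_block_update_take[OF D i'(1), of "blk D i"] blk_in_block[OF D i] False
      unfolding s_def by simp
    ultimately show ?thesis using False final by (simp add: x_def lab_def i'_def)
  qed
qed

theorem mainTheorem19: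
  fixes n :: nat and D D' :: "nat set list"
  assumes "n \<ge> 2"
    and "ordered_partition n D" and "ordered_partition n D'"
    and "special_pair162 n D D'"
  shows "\<forall>i<n. lab D ((i + 1) mod n) i = lab D' ((i + 1) mod n) i"
proof (intro allI impI)
  fix i assume i: "i < n"
  have "sched_update n D (\<lambda>j. j \<noteq> i) i = sched_update n D' (\<lambda>j. j \<noteq> i) i"
    using assms(4) i unfolding special_pair162_def by blast
  then have "lab D ((i + 1) mod n) i = LPlus \<longleftrightarrow> lab D' ((i + 1) mod n) i = LPlus"
    using sched_update_single_zero[OF assms(2,1) i] sched_update_single_zero[OF assms(3,1) i]
    by simp
  then show "lab D ((i + 1) mod n) i = lab D' ((i + 1) mod n) i"
    by (cases "lab D ((i + 1) mod n) i"; cases "lab D' ((i + 1) mod n) i") simp_all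
qed

end
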